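(* Let $N$ be an NFA and let $\sim$ be an equivalence relation on its vertex set that refines $\sim_{\mathrm{fwd}}$. Let $\bar N$ be the NFA obtained by grouping $N$ by $\sim$. Then $\bar N$ has a conflict if and only if $N$ has a conflict.
   Context: An NFA $N$ over a finite alphabet $A$, with action set $T$ and a relation $\mathrm{conf}\subseteq T\times T$, consists of a finite vertex set $V$, a starting vertex $v_s\in V$, an accepting action set $T_v\subseteq T$ for each $v\in V$, and a set of labeled edges $v\xrightarrow{\lambda}w$ with $v,w\in V$ and $\lambda\in A\cup\{\varepsilon\}$. For $U,W\subseteq T$, $\mathrm{conf}(U,W)$ means $\mathrm{conf}(a,b)$ for some $a\in U,b\in W$. For a vertex $u$ and a finite sequence $\tau=\tau_1\cdots\tau_r$ ($r\ge0$) with $\tau_i\in A\cup\{\varepsilon\}$, a vertex $w$ is reachable from $u$ on $\tau$ if there are vertices $u=v_1,\dots,v_{r+1}=w$ with an edge $v_i\xrightarrow{\tau_i}v_{i+1}$ for each $i$; $w$ is reachable from $u$ on a string $\zeta\in A^*$ if it is reachable on some sequence whose concatenation (reading $\varepsilon$ as the empty string) equals $\zeta$. A conflict in $N$ consists of two (not necessarily distinct) vertices $w,w'$ that are both reachable from $v_s$ on the same string $\zeta\in A^*$ and satisfy $\mathrm{conf}(T_w,T_{w'})$. Given an equivalence relation $\sim$ on $V$, the grouped NFA $\bar N$ has as vertices the equivalence classes, starting vertex the class of $v_s$, action sets $T_{\bar v}=\bigcup_{v\in\bar v}T_v$, and an edge $\bar v\xrightarrow{\lambda}\bar w$ iff some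 $v\in\bar v$, $w\in\bar w$ have an edge $v\xrightarrow{\lambda}w$ in $N$. Vertices $v_1,v_2$ of $N$ are forward-equivalent, $v_1\sim_{\mathrm{fwd}}v_2$, if for every finite sequence $\tau$ over $A\cup\{\varepsilon\}$, $v_1$ is reachable from $v_s$ on $\tau$ iff $v_2$ is reachable from $v_s$ on $\tau$. *)

theory Defs
  imports Main
begin

text \<open>An NFA over alphabet A with action set T. Edge labels are
  'a option, where None stands for epsilon. The alphabet A, the action set T
  and the relation conf are external parameters.\<close>

record ('v, 'a, 't) nfa =
  verts :: "'v set"
  start :: 'v
  accs  :: "'v \<Rightarrow> 't set"
  edges :: "('v \<times> 'a option \<times> 'v) set"

definition is_nfa ::
  "'a set \<Rightarrow> 't set \<Rightarrow> ('t \<Rightarrow> 't \<Rightarrow> bool) \<Rightarrow> ('v, 'a, 't) nfa \<Rightarrow> bool" where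
  "is_nfa A T conf N \<longleftrightarrow>
     finite A \<and> (\<forall>x y. conf x y \<longrightarrow> x \<in> T \<and> y \<in> T) \<and>
     finite (verts N) \<and> start N \<in> verts N \<and>
     (\<forall>v \<in> verts N. accs N v \<subseteq> T) \<and>
     edges N \<subseteq> verts N \<times> (Some ` A \<union> {None}) \<times> verts N"

inductive reach_seq :: "('v, 'a, 't) nfa \<Rightarrow> 'v \<Rightarrow> 'a option list \<Rightarrow> 'v \<Rightarrow> bool"
  for N where
  nil: "reach_seq N u [] u"
| cons: "(u, l, v) \<in> edges N \<Longrightarrow> reach_seq N v ls w \<Longrightarrow> reach_seq N u (l # ls) w"

definition word_of :: "'a option list \<Rightarrow> 'a list" where
  "word_of ls = concat (map (\<lambda>l. case l of None \<Rightarrow> [] | Some a \<Rightarrow> [a]) ls)"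

definition reach_str :: "('v, 'a, 't) nfa \<Rightarrow> 'v \<Rightarrow> 'a list \<Rightarrow> 'v \<Rightarrow> bool" where
  "reach_str N u z w \<longleftrightarrow> (\<exists>ls. reach_seq N u ls w \<and> word_of ls = z)"

definition conf_sets :: "('t \<Rightarrow> 't \<Rightarrow> bool) \<Rightarrow> 't set \<Rightarrow> 't set \<Rightarrow> bool" where
  "conf_sets conf U W \<longleftrightarrow> (\<exists>a \<in> U. \<exists>b \<in> W. conf a b)"

definition has_conflict ::
  "'a set \<Rightarrow> ('t \<Rightarrow> 't \<Rightarrow> bool) \<Rightarrow> ('v, 'a, 't) nfa \<Rightarrow> bool" where
  "has_conflict A conf N \<longleftrightarrow>
     (\<exists>w \<in> verts N. \<exists>w' \<in> verts N. \<exists>z. set z \<subseteq> A \<and>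
        reach_str N (start N) z w \<and> reach_str N (start N) z w' \<and>
        conf_sets conf (accs N w) (accs N w'))"

definition fwd_equiv :: "'a set \<Rightarrow> ('v, 'a, 't) nfa \<Rightarrow> 'v \<Rightarrow> 'v \<Rightarrow> bool" where
  "fwd_equiv A N v1 v2 \<longleftrightarrow>
     (\<forall>ls. set ls \<subseteq> Some ` A \<union> {None} \<longrightarrow>
        (reach_seq N (start N) ls v1 \<longleftrightarrow> reach_seq N (start N) ls v2))"

definition group_nfa :: "('v, 'a, 't) nfa \<Rightarrow> ('v \<times> 'v) set \<Rightarrow> ('v set, 'a, 't) nfa" where
  "group_nfa N R =
     \<lparr> verts = verts N // R,
       start = R `` {start N},
       accs = (\<lambda>C. \<Union>v \<in> C. accs N v),
       edges = {(C, l, D). C \<in> verts N // R \<and> D \<in> verts N // R \<and>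
                  (\<exists>v \<in> C. \<exists>w \<in> D. (v, l, w) \<in> edges N)} \<rparr>"

end

theory Submission
  imports Defs
begin

text \<open>Every path of N projects onto a path of the grouped NFA with the same labels, so
  grouping can only create conflicts. Conversely, a path of the grouped NFA from its start
  lifts, edge by edge, to a path of N ending at some member of the final class; since all
  members of a class are forward-equivalent, every member of that class is reached on the
  same label sequence. Hence a conflict between two classes comes from a conflict between
  two of their members.\<close>

lemma reach_seq_snoc:
  "reach_seq N u (ls @ [l]) w \<longleftrightarrow> (\<exists>v. reach_seq N u ls v \<and> (v, l, w) \<in> edges N)"
proof (induction ls arbitrary: u)
  case Nil
  show ?case
    by (auto intro: reach_seq.intros elim: reach_seq.cases)
next
  case (Cons a ls)
  have "reach_seq N u ((a # ls) @ [l]) w \<longleftrightarrow>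
        (\<exists>x. (u, a, x) \<in> edges N \<and> reach_seq N x (ls @ [l]) w)"
    by (auto intro: reach_seq.intros elim: reach_seq.cases)
  also have "\<dots> \<longleftrightarrow> (\<exists>v. reach_seq N u (a # ls) v \<and> (v, l, w) \<in> edges N)"
    using Cons.IH by (blast intro: reach_seq.intros elim: reach_seq.cases)
  finally show ?case .
qed

lemma reach_seq_labels_subset:
  assumes "reach_seq M u ls w" and "edges M \<subseteq> UNIV \<times> L \<times> UNIV"
  shows "set ls \<subseteq> L"
  using assms by (induction rule: reach_seq.induct) auto

lemma reach_str_target_in_verts:
  assumes "reach_str M u z w" and "u \<in> verts M" and "edges M \<subseteq> UNIV \<times> UNIV \<times> verts M"
  shows "w \<in> verts M"
proof -
  obtain ls where "reach_seq M u ls w"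
    using assms(1) by (auto simp: reach_str_def)
  then show ?thesis
    using assms(2,3) by (induction rule: reach_seq.induct) auto
qed

lemma reach_seq_group_nfa:
  assumes R: "equiv (verts N) R" and edges: "edges N \<subseteq> verts N \<times> UNIV \<times> verts N"
    and "reach_seq N u ls w"
  shows "reach_seq (group_nfa N R) (R `` {u}) ls (R `` {w})"
  using assms(3)
proof (induction rule: reach_seq.induct)
  case (nil u)
  show ?case by (rule reach_seq.nil)
next
  case (cons u l v ls w)
  have "u \<in> verts N" "v \<in> verts N"
    using cons.hyps(1) edges by auto
  with R have "u \<in> R `` {u}" "v \<in> R `` {v}"
    by (auto simp: equiv_def refl_on_def)
  with \<open>u \<in> verts N\<close> \<open>v \<in> verts N\<close> have "(R `` {u}, l, R `` {v}) \<in> edges (group_nfa N R)"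
    using cons.hyps(1) by (auto simp: group_nfa_def intro: quotientI)
  then show ?case
    using cons.IH by (rule reach_seq.cons)
qed

lemma reach_str_group_nfa:
  assumes "equiv (verts N) R" and "edges N \<subseteq> verts N \<times> UNIV \<times> verts N"
    and "reach_str N (start N) z w"
  shows "reach_str (group_nfa N R) (start (group_nfa N R)) z (R `` {w})"
proof -
  obtain ls where "reach_seq N (start N) ls w" "word_of ls = z"
    using assms(3) by (auto simp: reach_str_def)
  moreover have "start (group_nfa N R) = R `` {start N}"
    by (simp add: group_nfa_def)
  ultimately show ?thesis
    using reach_seq_group_nfa[OF assms(1,2)] unfolding reach_str_def by metis
qed

lemma reach_seq_group_nfa_members:
  assumes R: "equiv (verts N) R"
    and fwd: "\<And>v1 v2. (v1, v2) \<in> R \<Longrightarrow> fwd_equiv A N v1 v2"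
    and labels: "edges N \<subseteq> UNIV \<times> (Some ` A \<union> {None}) \<times> UNIV"
    and "reach_seq (group_nfa N R) (start (group_nfa N R)) ls D" and "w \<in> D"
  shows "reach_seq N (start N) ls w"
  using assms(4,5)
proof (induction ls arbitrary: D w rule: rev_induct)
  case Nil
  then have "(start N, w) \<in> R"
    by (auto simp: group_nfa_def elim: reach_seq.cases)
  with fwd show ?case
    unfolding fwd_equiv_def by (metis empty_set empty_subsetI reach_seq.nil)
next
  case (snoc l ls)
  then obtain C where C: "reach_seq (group_nfa N R) (start (group_nfa N R)) ls C"
    and "(C, l, D) \<in> edges (group_nfa N R)"
    by (metis reach_seq_snoc)
  then have D: "D \<in> verts N // R" and "\<exists>v \<in> C. \<exists>w' \<in> D. (v, l, w') \<in> edges N"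
    by (auto simp: group_nfa_def)
  then obtain v w' where "v \<in> C" "w' \<in> D" "(v, l, w') \<in> edges N"
    by blast
  then have reach_w': "reach_seq N (start N) (ls @ [l]) w'"
    using snoc.IH[OF C] reach_seq_snoc by metis
  have "(w', w) \<in> R"
    using D \<open>w' \<in> D\<close> \<open>w \<in> D\<close> R by (metis quotient_eq_iff)
  moreover have "set (ls @ [l]) \<subseteq> Some ` A \<union> {None}"
    using reach_w' labels by (rule reach_seq_labels_subset)
  ultimately show ?case
    using fwd reach_w' unfolding fwd_equiv_def by blast
qed

lemma reach_str_group_nfa_members:
  assumes "equiv (verts N) R"
    and "\<And>v1 v2. (v1, v2) \<in> R \<Longrightarrow> fwd_equiv A N v1 v2"
    and "edges N \<subseteq> UNIV \<times> (Some ` A \<union> {None}) \<times> UNIV"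
    and "reach_str (group_nfa N R) (start (group_nfa N R)) z D" and "w \<in> D"
  shows "reach_str N (start N) z w"
  using assms reach_seq_group_nfa_members unfolding reach_str_def by metis

lemma has_conflict_group_nfa:
  assumes R: "equiv (verts N) R" and edges: "edges N \<subseteq> verts N \<times> UNIV \<times> verts N"
    and "has_conflict A conf N"
  shows "has_conflict A conf (group_nfa N R)"
proof -
  obtain w w' z where w: "w \<in> verts N" "w' \<in> verts N" and z: "set z \<subseteq> A"
    and reach: "reach_str N (start N) z w" "reach_str N (start N) z w'"
    and conf: "conf_sets conf (accs N w) (accs N w')"
    using assms(3) unfolding has_conflict_def by (elim bexE exE conjE)
  have "w \<in> R `` {w}" "w' \<in> R `` {w'}"
    using R w by (auto simp: equiv_def refl_on_def)
  with conf have "conf_sets conf (accs (group_nfa N R) (R `` {w})) (accs (group_nfa N R) (R `` {w'}))"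
    by (force simp: group_nfa_def conf_sets_def)
  moreover have "R `` {w} \<in> verts (group_nfa N R)" "R `` {w'} \<in> verts (group_nfa N R)"
    using w by (simp_all add: group_nfa_def quotientI)
  moreover have "reach_str (group_nfa N R) (start (group_nfa N R)) z (R `` {w})"
    "reach_str (group_nfa N R) (start (group_nfa N R)) z (R `` {w'})"
    using reach_str_group_nfa[OF R edges reach(1)] reach_str_group_nfa[OF R edges reach(2)] .
  ultimately show ?thesis
    using z unfolding has_conflict_def by blast
qed

lemma has_conflict_of_group_nfa:
  assumes R: "equiv (verts N) R"
    and fwd: "\<And>v1 v2. (v1, v2) \<in> R \<Longrightarrow> fwd_equiv A N v1 v2"
    and edges: "edges N \<subseteq> verts N \<times> (Some ` A \<union> {None}) \<times> verts N"
    and start: "start N \<in> verts N"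
    and "has_conflict A conf (group_nfa N R)"
  shows "has_conflict A conf N"
proof -
  have labels: "edges N \<subseteq> UNIV \<times> (Some ` A \<union> {None}) \<times> UNIV"
    and targets: "edges N \<subseteq> UNIV \<times> UNIV \<times> verts N"
    using edges by auto
  obtain C C' z where z: "set z \<subseteq> A"
    and reach: "reach_str (group_nfa N R) (start (group_nfa N R)) z C"
      "reach_str (group_nfa N R) (start (group_nfa N R)) z C'"
    and "conf_sets conf (accs (group_nfa N R) C) (accs (group_nfa N R) C')"
    using assms(5) unfolding has_conflict_def by blast
  then obtain v v' where "v \<in> C" "v' \<in> C'"
    and conf: "conf_sets conf (accs N v) (accs N v')"
    by (auto simp: group_nfa_def conf_sets_def)
  have "reach_str N (start N) z v"
    using R fwd labels reach(1) \<open>v \<in> C\<close> by (rule reach_str_group_nfa_members)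
  moreover have "reach_str N (start N) z v'"
    using R fwd labels reach(2) \<open>v' \<in> C'\<close> by (rule reach_str_group_nfa_members)
  moreover have "v \<in> verts N" "v' \<in> verts N"
    using calculation start targets by (auto intro: reach_str_target_in_verts)
  ultimately show ?thesis
    using z conf unfolding has_conflict_def by blast
qed

theorem mainTheorem5:
  fixes N :: "('v, 'a, 't) nfa" and A :: "'a set" and T :: "'t set"
    and conf :: "'t \<Rightarrow> 't \<Rightarrow> bool" and R :: "('v \<times> 'v) set"
  assumes "is_nfa A T conf N"
    and "equiv (verts N) R"
    and "\<And>v1 v2. (v1, v2) \<in> R \<Longrightarrow> fwd_equiv A N v1 v2"
  shows "has_conflict A conf (group_nfa N R) \<longleftrightarrow> has_conflict A conf N"
proof -
  have edges: "edges N \<subseteq> verts N \<times> (Some ` A \<union> {None}) \<times> verts N"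
    and start: "start N \<in> verts N"
    using assms(1) by (simp_all add: is_nfa_def)
  then have "edges N \<subseteq> verts N \<times> UNIV \<times> verts N"
    by blast
  then show ?thesis
    using has_conflict_group_nfa[OF assms(2)] has_conflict_of_group_nfa[OF assms(2,3) edges start]
    by blast
qed

end
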